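(* Consider the following networked control setting. Let $f_p:\mathbb{R}^{n_p}\times\mathbb{R}^{m_p}\to\mathbb{R}^{n_p}$ with $f_p(0,0)=0$, a closed set $\mathbb{X}_p\subseteq\mathbb{R}^{n_p}$ and a compact set $\mathbb{U}_p\subseteq\mathbb{R}^{m_p}$, both containing the origin, $Q,R>0$, and integers $g\in\mathbb{I}_{\geq1}$, $c\in\mathbb{I}_{\geq g}$, $b\in\mathbb{I}_{\geq c}$ with $q:=\lceil c/g\rceil\geq2$. The overall state is $x=(x_p,u_s,\beta)\in\mathbb{X}:=\mathbb{X}_p\times\mathbb{U}_p\times\mathbb{I}_{[0,b]}$, the input $u=(u_c,\gamma,\delta)\in\mathbb{U}:=\mathbb{U}_p\times\{(\gamma,\delta)\in\{0,1\}^2:\gamma+\delta\leq1\}$, and the dynamics are $x(k+1)=f(x(k),u(k))$ with $$f(x,u)=\big(f_p(x_p,(\gamma+\delta)u_c+(1-\gamma-\delta)u_s),\ (\gamma+\delta)u_c+(1-\gamma-\delta)u_s,\ \min\{\beta+(1-\delta)g-\gamma c,b\}\big).$$ For $\psi>0$ the stage cost is $\ell(x,u)=\|x_p\|_Q^2+(\gamma+\delta)\|u_c\|_R^2+(1-\gamma-\delta)\|u_s\|_R^2+\psi(b^2-\beta^2)$. For $u_c\in\mathbb{U}_p$ define $f_{p,0}(x_p,u_c):=x_p$, $f_{p,i}(x_p,u_c):=f_p(f_{p,i-1}(x_p,u_c),u_c)$. Assume: (A1) there exist a closed set $\mathbb{X}_{f,p}\subseteq\mathbb{X}_p$ containing the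 origin and $k_p:\mathbb{X}_{f,p}\to\mathbb{U}_p$ such that for all $x_p\in\mathbb{X}_{f,p}$: $f_{p,i}(x_p,k_p(x_p))\in\mathbb{X}_p$ for all $i\in\mathbb{I}_{[1,q-1]}$ and $f_{p,q}(x_p,k_p(x_p))\in\mathbb{X}_{f,p}$; moreover $(0,0)\in\operatorname{int}(\mathbb{X}_{f,p}\times\mathbb{U}_p)$; (A2) there is a continuous positive definite $V_{f,p}:\mathbb{X}_{f,p}\to\mathbb{R}$ with, for all $x_p\in\mathbb{X}_{f,p}$, $V_{f,p}(f_{p,q}(x_p,k_p(x_p)))-V_{f,p}(x_p)\leq -q\|k_p(x_p)\|_R^2-\sum_{i=0}^{q-1}\|f_{p,i}(x_p,k_p(x_p))\|_Q^2$; (A4) $\sigma>0$ satisfies $\sigma\geq\psi\big(qb^2-\tfrac16g^2(q-1)(q-2)(2q-3)\big)$. Let $V_f(x):=V_{f,p}(x_p)+\sigma(b^2-\beta^2)$ and $\mathbb{X}_f:=\mathbb{X}_{f,p}\times\mathbb{U}_p\times\mathbb{I}_{[0,b]}$. Fix $r\in\mathbb{I}_{\geq1}$, $M:=rq$, and $N:=JM$ with $J\in\mathbb{I}_{\geq1}$. The closed loop is generated by the rollout scheme: at each $k=jM$, $j\in\mathbb{I}_{\geq0}$, solve $\mathbb{P}(x(jM))$: minimize $\sum_{i=0}^{N-1}\ell(x(i|jM),u(i|jM))+V_f(x(N|jM))$ over $u(0|jM),\dots,u(N-1|jM)$ subject to $x(i+1|jM)=f(x(i|jM),u(i|jM))$,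 $x(i|jM)\in\mathbb{X}$, $u(i|jM)\in\mathbb{U}$ for $i\in\mathbb{I}_{[0,N-1]}$, $x(0|jM)=x(jM)$, $x(N|jM)\in\mathbb{X}_f$, with optimizer $u^*(\cdot|jM)$, and apply $u(jM+i)=u^*(i|jM)$ for $i\in\mathbb{I}_{[0,M-1]}$. Then, if $\mathbb{P}(x(0))$ is feasible, $\mathbb{P}(x(jM))$ is feasible for all $j\in\mathbb{I}_{\geq0}$ and the point $(0,0,b)$ is asymptotically stable for the closed loop.
   Context: $\mathbb{I}$ denotes the integers, $\mathbb{I}_{[a,b]}:=\mathbb{I}\cap[a,b]$, $\mathbb{I}_{\geq a}:=\mathbb{I}\cap[a,\infty)$, $\|v\|_A^2:=v^TAv$, $A>0$ means positive definite, and int denotes the interior. Here $x_p$ is the plant state, $u_s$ the last applied (held) input, $\beta$ the token level of a token bucket (size $b$, rate $g$, cost $c$); $\gamma=1$ is a transmission over the token-bucket-constrained network and $\delta=1$ a transmission over a direct link which consumes no tokens and during which no tokens are added. "Feasible" means the constraint set is nonempty. *)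

theory Defs
  imports "HOL-Analysis.Analysis"
begin

definition qf :: "real^'k^'k \<Rightarrow> real^'k \<Rightarrow> real" where
  "qf A v = v \<bullet> (A *v v)"

definition pos_def_mat :: "real^'k^'k \<Rightarrow> bool" where
  "pos_def_mat A \<longleftrightarrow> transpose A = A \<and> (\<forall>v. v \<noteq> 0 \<longrightarrow> qf A v > 0)"

definition fpi :: "('n \<Rightarrow> 'm \<Rightarrow> 'n) \<Rightarrow> nat \<Rightarrow> 'n \<Rightarrow> 'm \<Rightarrow> 'n" where
  "fpi fp i xp uc = ((\<lambda>z. fp z uc) ^^ i) xp"

text \<open>States x = (x_p, u_s, beta), inputs u = (u_c, gamma, delta).\<close>
type_synonym ('n,'m) nstate = "(real^'n::finite) \<times> (real^'m::finite) \<times> int"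
type_synonym 'm ninput = "(real^'m::finite) \<times> int \<times> int"

definition applied_input :: "('n,'m) nstate \<Rightarrow> 'm ninput \<Rightarrow> real^'m" where
  "applied_input x u = (case x of (xp, us, \<beta>) \<Rightarrow> case u of (uc, \<gamma>, \<delta>) \<Rightarrow>
      of_int (\<gamma> + \<delta>) *\<^sub>R uc + of_int (1 - \<gamma> - \<delta>) *\<^sub>R us)"

definition sys_f :: "(real^'n \<Rightarrow> real^'m \<Rightarrow> real^'n) \<Rightarrow> int \<Rightarrow> int \<Rightarrow> int
      \<Rightarrow> ('n,'m) nstate \<Rightarrow> 'm ninput \<Rightarrow> ('n,'m) nstate" where
  "sys_f fp g c b x u = (case x of (xp, us, \<beta>) \<Rightarrow> case u of (uc, \<gamma>, \<delta>) \<Rightarrow>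
      (fp xp (applied_input x u), applied_input x u, min (\<beta> + (1 - \<delta>) * g - \<gamma> * c) b))"

definition stage_cost :: "real^'n^'n \<Rightarrow> real^'m^'m \<Rightarrow> real \<Rightarrow> int
      \<Rightarrow> ('n,'m) nstate \<Rightarrow> 'm ninput \<Rightarrow> real" where
  "stage_cost Q R \<psi> b x u = (case x of (xp, us, \<beta>) \<Rightarrow> case u of (uc, \<gamma>, \<delta>) \<Rightarrow>
      qf Q xp + of_int (\<gamma> + \<delta>) * qf R uc + of_int (1 - \<gamma> - \<delta>) * qf R us
      + \<psi> * (of_int b ^ 2 - of_int \<beta> ^ 2))"

definition state_set :: "(real^'n) set \<Rightarrow> (real^'m) set \<Rightarrow> int \<Rightarrow> ('n,'m) nstate set" where
  "state_set Xp Up b = Xp \<times> Up \<times> {0..b}"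

definition input_set :: "(real^'m) set \<Rightarrow> 'm ninput set" where
  "input_set Up = Up \<times> {(\<gamma>, \<delta>). \<gamma> \<in> {0, 1} \<and> \<delta> \<in> {0, 1} \<and> \<gamma> + \<delta> \<le> 1}"

definition term_cost :: "(real^'n \<Rightarrow> real) \<Rightarrow> real \<Rightarrow> int \<Rightarrow> ('n,'m) nstate \<Rightarrow> real" where
  "term_cost Vfp \<sigma> b x = (case x of (xp, us, \<beta>) \<Rightarrow> Vfp xp + \<sigma> * (of_int b ^ 2 - of_int \<beta> ^ 2))"

fun traj :: "('s \<Rightarrow> 'i \<Rightarrow> 's) \<Rightarrow> 's \<Rightarrow> (nat \<Rightarrow> 'i) \<Rightarrow> nat \<Rightarrow> 's" where
  "traj F x0 us 0 = x0"
| "traj F x0 us (Suc i) = F (traj F x0 us i) (us i)"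

definition ocp_admissible :: "('s \<Rightarrow> 'i \<Rightarrow> 's) \<Rightarrow> 's set \<Rightarrow> 'i set \<Rightarrow> 's set \<Rightarrow> nat
      \<Rightarrow> 's \<Rightarrow> (nat \<Rightarrow> 'i) \<Rightarrow> bool" where
  "ocp_admissible F X U Xf N x0 us \<longleftrightarrow>
     (\<forall>i<N. traj F x0 us i \<in> X \<and> us i \<in> U) \<and> traj F x0 us N \<in> Xf"

definition ocp_feasible :: "('s \<Rightarrow> 'i \<Rightarrow> 's) \<Rightarrow> 's set \<Rightarrow> 'i set \<Rightarrow> 's set \<Rightarrow> nat \<Rightarrow> 's \<Rightarrow> bool" where
  "ocp_feasible F X U Xf N x0 \<longleftrightarrow> (\<exists>us. ocp_admissible F X U Xf N x0 us)"

definition ocp_cost :: "('s \<Rightarrow> 'i \<Rightarrow> 's) \<Rightarrow> ('s \<Rightarrow> 'i \<Rightarrow> real) \<Rightarrow> ('s \<Rightarrow> real) \<Rightarrow> nat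
      \<Rightarrow> 's \<Rightarrow> (nat \<Rightarrow> 'i) \<Rightarrow> real" where
  "ocp_cost F L Vf N x0 us = (\<Sum>i<N. L (traj F x0 us i) (us i)) + Vf (traj F x0 us N)"

definition ocp_optimal :: "('s \<Rightarrow> 'i \<Rightarrow> 's) \<Rightarrow> 's set \<Rightarrow> 'i set \<Rightarrow> 's set
      \<Rightarrow> ('s \<Rightarrow> 'i \<Rightarrow> real) \<Rightarrow> ('s \<Rightarrow> real) \<Rightarrow> nat \<Rightarrow> 's \<Rightarrow> (nat \<Rightarrow> 'i) \<Rightarrow> bool" where
  "ocp_optimal F X U Xf L Vf N x0 us \<longleftrightarrow> ocp_admissible F X U Xf N x0 us \<and>
     (\<forall>vs. ocp_admissible F X U Xf N x0 vs \<longrightarrow> ocp_cost F L Vf N x0 us \<le> ocp_cost F L Vf N x0 vs)"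

definition rollout_closed_loop :: "('s \<Rightarrow> 'i \<Rightarrow> 's) \<Rightarrow> 's set \<Rightarrow> 'i set \<Rightarrow> 's set
      \<Rightarrow> ('s \<Rightarrow> 'i \<Rightarrow> real) \<Rightarrow> ('s \<Rightarrow> real) \<Rightarrow> nat \<Rightarrow> nat \<Rightarrow> (nat \<Rightarrow> 's) \<Rightarrow> (nat \<Rightarrow> 'i) \<Rightarrow> bool" where
  "rollout_closed_loop F X U Xf L Vf N M xs us \<longleftrightarrow>
     (\<forall>k. xs (Suc k) = F (xs k) (us k)) \<and>
     (\<forall>j. ocp_feasible F X U Xf N (xs (j * M)) \<longrightarrow>
          (\<exists>vs. ocp_optimal F X U Xf L Vf N (xs (j * M)) vs \<and> (\<forall>i<M. us (j * M + i) = vs i)))"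

text \<open>Asymptotic stability of an equilibrium for a (set-valued) closed loop, with region
  of attraction D; d measures the distance of a state to the equilibrium.\<close>
definition asympt_stable_cl :: "((nat \<Rightarrow> 's) \<Rightarrow> (nat \<Rightarrow> 'i) \<Rightarrow> bool) \<Rightarrow> 's set \<Rightarrow> ('s \<Rightarrow> real) \<Rightarrow> bool" where
  "asympt_stable_cl CL D d \<longleftrightarrow>
     (\<forall>\<epsilon>>0. \<exists>\<delta>>0. \<forall>xs us. CL xs us \<and> xs 0 \<in> D \<and> d (xs 0) < \<delta> \<longrightarrow> (\<forall>k. d (xs k) < \<epsilon>)) \<and>
     (\<forall>xs us. CL xs us \<and> xs 0 \<in> D \<longrightarrow> (\<lambda>k. d (xs k)) \<longlonglongrightarrow> 0)"

definition dist_eq :: "int \<Rightarrow> ('n::finite,'m::finite) nstate \<Rightarrow> real" where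
  "dist_eq b x = (case x of (xp, us, \<beta>) \<Rightarrow> norm xp + norm us + \<bar>of_int (\<beta> - b)\<bar>)"

end

theory Submission
  imports Defs
begin

text \<open>
  The argument is the standard one for model predictive control with terminal ingredients,
  applied block-wise.  On \<open>\<X>\<^sub>f\<close> the terminal law \<open>k\<^sub>p\<close>, transmitted once over the direct link and
  then held for \<open>q - 1\<close> steps, keeps the state admissible and decreases \<open>V\<^sub>f\<close> by at least the
  accumulated stage cost: for the plant part this is (A2); for the token part the level rises by
  \<open>g\<close> per held step, so the token cost is at most the bound in (A4), while the level itself rises
  by at least one unless it is already full, which pays for it through \<open>\<sigma>\<close>.  Repeating this block
  gives terminal ingredients over \<open>M\<close> and \<open>N\<close> steps.  Dropping the first \<open>M\<close> inputs of an
  optimizer and appending such a block yields a feasible candidate at the next rollout instant,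
  so the problem stays feasible and the optimal cost drops by the stage cost applied meanwhile.
  Hence the closed-loop stage cost is summable and, near the equilibrium, bounded by \<open>V\<^sub>f(x(0))\<close>,
  which is small by continuity.  Finally a small stage cost forces \<open>x\<^sub>p\<close> and the applied input
  to be small and the bucket to be full, which bounds the distance to \<open>(0, 0, b)\<close>.
\<close>

section \<open>Trajectories under concatenated input sequences\<close>

lemma sum_lessThan_add:
  fixes m n :: nat
  shows "(\<Sum>i<m + n. f i) = (\<Sum>i<m. f i) + (\<Sum>i<n. f (m + i))"
  by (induction n) (simp_all add: add_ac)

lemma traj_cong: "(\<And>i. i < n \<Longrightarrow> us i = vs i) \<Longrightarrow> traj F x us n = traj F x vs n"
  by (induction n) auto

lemma traj_add: "traj F x us (m + n) = traj F (traj F x us m) (\<lambda>i. us (m + i)) n"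
  by (induction n) auto

definition append_inputs :: "nat \<Rightarrow> (nat \<Rightarrow> 'i) \<Rightarrow> (nat \<Rightarrow> 'i) \<Rightarrow> nat \<Rightarrow> 'i" where
  "append_inputs m us vs i = (if i < m then us i else vs (i - m))"

lemma append_inputs_shift: "append_inputs m us (\<lambda>i. us (m + i)) = us"
  by (auto simp: append_inputs_def)

lemma traj_append_inputs_le: "i \<le> m \<Longrightarrow> traj F x (append_inputs m us vs) i = traj F x us i"
  by (rule traj_cong) (simp add: append_inputs_def)

lemma traj_append_inputs_add:
  "traj F x (append_inputs m us vs) (m + i) = traj F (traj F x us m) vs i"
  using traj_add[of F x "append_inputs m us vs" m i]
  by (simp add: traj_append_inputs_le append_inputs_def)

lemma ocp_admissible_append:
  assumes "ocp_admissible F X U Y m x us" and "ocp_admissible F X U Z n (traj F x us m) vs"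
  shows "ocp_admissible F X U Z (m + n) x (append_inputs m us vs)"
  unfolding ocp_admissible_def
proof (rule conjI, intro allI impI)
  fix i assume "i < m + n"
  then consider "i < m" | j where "i = m + j" "j < n"
    by (metis add_less_imp_less_left le_Suc_ex not_less)
  then show "traj F x (append_inputs m us vs) i \<in> X \<and> append_inputs m us vs i \<in> U"
  proof cases
    case 1
    then show ?thesis
      using assms(1) by (simp add: ocp_admissible_def traj_append_inputs_le append_inputs_def)
  next
    case 2
    then show ?thesis
      using assms(2) by (simp add: ocp_admissible_def traj_append_inputs_add append_inputs_def)
  qed
next
  show "traj F x (append_inputs m us vs) (m + n) \<in> Z"
    using assms(2) by (simp add: ocp_admissible_def traj_append_inputs_add)
qed

lemma ocp_cost_append:
  "ocp_cost F L Vf (m + n) x (append_inputs m us vs) =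
     (\<Sum>i<m. L (traj F x us i) (us i)) + ocp_cost F L Vf n (traj F x us m) vs"
  by (simp add: ocp_cost_def sum_lessThan_add traj_append_inputs_le traj_append_inputs_add
      append_inputs_def)

lemma ocp_admissible_shift:
  assumes "ocp_admissible F X U Xf N x us" and "m \<le> N"
  shows "ocp_admissible F X U Xf (N - m) (traj F x us m) (\<lambda>i. us (m + i))"
  using assms traj_add[of F x us m, symmetric] by (auto simp: ocp_admissible_def)

lemma ocp_cost_shift:
  assumes "m \<le> N"
  shows "ocp_cost F L Vf N x us =
    (\<Sum>i<m. L (traj F x us i) (us i)) + ocp_cost F L Vf (N - m) (traj F x us m) (\<lambda>i. us (m + i))"
  using ocp_cost_append[of F L Vf m "N - m" x us "\<lambda>i. us (m + i)"] assms
  by (simp add: append_inputs_shift)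

lemma ocp_cost_nonneg:
  assumes "\<forall>x\<in>X. \<forall>u\<in>U. 0 \<le> L x u" and "\<forall>x\<in>Xf. 0 \<le> Vf x"
    and "ocp_admissible F X U Xf N x us"
  shows "0 \<le> ocp_cost F L Vf N x us"
  using assms unfolding ocp_cost_def ocp_admissible_def by (intro add_nonneg_nonneg sum_nonneg) auto

section \<open>Terminal ingredients and the rollout closed loop\<close>

definition terminal_cost_decrease :: "('s \<Rightarrow> 'i \<Rightarrow> 's) \<Rightarrow> 's set \<Rightarrow> 'i set \<Rightarrow> 's set
    \<Rightarrow> ('s \<Rightarrow> 'i \<Rightarrow> real) \<Rightarrow> ('s \<Rightarrow> real) \<Rightarrow> nat \<Rightarrow> bool" where
  "terminal_cost_decrease F X U Xf L Vf m \<longleftrightarrow>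
     (\<forall>x\<in>Xf. \<exists>ws. ocp_admissible F X U Xf m x ws \<and> ocp_cost F L Vf m x ws \<le> Vf x)"

lemma terminal_cost_decrease_mult:
  assumes "terminal_cost_decrease F X U Xf L Vf q"
  shows "terminal_cost_decrease F X U Xf L Vf (k * q)"
  unfolding terminal_cost_decrease_def
proof (induction k)
  case 0
  show ?case by (auto simp: ocp_admissible_def ocp_cost_def)
next
  case (Suc k)
  show ?case
  proof
    fix x assume "x \<in> Xf"
    then obtain w1 where w1: "ocp_admissible F X U Xf q x w1" "ocp_cost F L Vf q x w1 \<le> Vf x"
      using assms by (auto simp: terminal_cost_decrease_def)
    then have "traj F x w1 q \<in> Xf" by (simp add: ocp_admissible_def)
    then obtain w2 where w2: "ocp_admissible F X U Xf (k * q) (traj F x w1 q) w2"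
      "ocp_cost F L Vf (k * q) (traj F x w1 q) w2 \<le> Vf (traj F x w1 q)"
      using Suc.IH by blast
    have "ocp_admissible F X U Xf (q + k * q) x (append_inputs q w1 w2)"
      by (rule ocp_admissible_append[OF w1(1) w2(1)])
    moreover have "ocp_cost F L Vf (q + k * q) x (append_inputs q w1 w2) \<le> Vf x"
      using w1(2) w2(2) by (simp add: ocp_cost_append) (simp add: ocp_cost_def)
    ultimately show "\<exists>ws. ocp_admissible F X U Xf (Suc k * q) x ws \<and>
        ocp_cost F L Vf (Suc k * q) x ws \<le> Vf x"
      by (auto simp: add.commute)
  qed
qed

lemma ocp_admissible_shifted_candidate:
  assumes TM: "terminal_cost_decrease F X U Xf L Vf m" and "m \<le> N"
    and adm: "ocp_admissible F X U Xf N x us"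
  obtains ws where "ocp_admissible F X U Xf N (traj F x us m) ws"
    and "ocp_cost F L Vf N (traj F x us m) ws + (\<Sum>i<m. L (traj F x us i) (us i))
      \<le> ocp_cost F L Vf N x us"
proof -
  let ?y = "traj F x us m" and ?s = "\<lambda>i. us (m + i)"
  have shifted: "ocp_admissible F X U Xf (N - m) ?y ?s"
    by (rule ocp_admissible_shift[OF adm \<open>m \<le> N\<close>])
  then have "traj F ?y ?s (N - m) \<in> Xf" by (simp add: ocp_admissible_def)
  then obtain w where w: "ocp_admissible F X U Xf m (traj F ?y ?s (N - m)) w"
    "ocp_cost F L Vf m (traj F ?y ?s (N - m)) w \<le> Vf (traj F ?y ?s (N - m))"
    using TM by (auto simp: terminal_cost_decrease_def)
  have "ocp_admissible F X U Xf N ?y (append_inputs (N - m) ?s w)"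
    using ocp_admissible_append[OF shifted w(1)] \<open>m \<le> N\<close> by simp
  moreover have "ocp_cost F L Vf N ?y (append_inputs (N - m) ?s w) \<le> ocp_cost F L Vf (N - m) ?y ?s"
    using ocp_cost_append[of F L Vf "N - m" m ?y ?s w] w(2) \<open>m \<le> N\<close> by (simp add: ocp_cost_def)
  ultimately show ?thesis
    using that ocp_cost_shift[OF \<open>m \<le> N\<close>, of F L Vf x us] by fastforce
qed

lemma closed_loop_eq_traj:
  assumes "\<forall>k. xs (Suc k) = F (xs k) (us k)" and "\<forall>i<m. us (p + i) = vs i" and "i \<le> m"
  shows "xs (p + i) = traj F (xs p) vs i"
  using assms(3) by (induction i) (simp_all add: assms(1,2))

lemma rollout_closed_loop_optimizers:
  assumes TM: "terminal_cost_decrease F X U Xf L Vf M" and "M \<le> N"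
    and cl: "rollout_closed_loop F X U Xf L Vf N M xs us"
    and feasible: "ocp_feasible F X U Xf N (xs 0)"
  obtains V where "\<And>j. ocp_optimal F X U Xf L Vf N (xs (j * M)) (V j)"
    and "\<And>j i. i < M \<Longrightarrow> us (j * M + i) = V j i"
    and "\<And>j i. i \<le> M \<Longrightarrow> xs (j * M + i) = traj F (xs (j * M)) (V j) i"
proof -
  have dyn: "\<forall>k. xs (Suc k) = F (xs k) (us k)" using cl by (simp add: rollout_closed_loop_def)
  have opt: "\<exists>vs. ocp_optimal F X U Xf L Vf N (xs (j * M)) vs \<and> (\<forall>i<M. us (j * M + i) = vs i)"
    if "ocp_feasible F X U Xf N (xs (j * M))" for j
    using cl that by (simp add: rollout_closed_loop_def)
  have "ocp_feasible F X U Xf N (xs (j * M))" for j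
  proof (induction j)
    case 0
    show ?case using feasible by simp
  next
    case (Suc j)
    then obtain vs where vs: "ocp_optimal F X U Xf L Vf N (xs (j * M)) vs"
      "\<forall>i<M. us (j * M + i) = vs i"
      using opt by blast
    have "xs (Suc j * M) = traj F (xs (j * M)) vs M"
      using closed_loop_eq_traj[OF dyn vs(2), of M] by (simp add: add.commute)
    then show ?case
      using ocp_admissible_shifted_candidate[OF TM \<open>M \<le> N\<close>] vs(1)
      by (metis ocp_feasible_def ocp_optimal_def)
  qed
  then obtain V where V: "\<And>j. ocp_optimal F X U Xf L Vf N (xs (j * M)) (V j)"
    "\<And>j. \<forall>i<M. us (j * M + i) = V j i"
    using opt by metis
  show ?thesis
    using that[OF V(1)] V(2) closed_loop_eq_traj[OF dyn V(2)] by blast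
qed

lemma rollout_recursively_feasible:
  assumes "terminal_cost_decrease F X U Xf L Vf M" and "M \<le> N"
    and "rollout_closed_loop F X U Xf L Vf N M xs us" and "ocp_feasible F X U Xf N (xs 0)"
  shows "ocp_feasible F X U Xf N (xs (j * M))"
  using rollout_closed_loop_optimizers[OF assms]
  by (metis ocp_feasible_def ocp_optimal_def)

lemma rollout_closed_loop_in_constraints:
  assumes TM: "terminal_cost_decrease F X U Xf L Vf M" and "0 < M" "M \<le> N"
    and cl: "rollout_closed_loop F X U Xf L Vf N M xs us"
    and feasible: "ocp_feasible F X U Xf N (xs 0)"
  shows "xs k \<in> X \<and> us k \<in> U"
proof -
  obtain V where V: "\<And>j. ocp_optimal F X U Xf L Vf N (xs (j * M)) (V j)"
    "\<And>j i. i < M \<Longrightarrow> us (j * M + i) = V j i"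
    "\<And>j i. i \<le> M \<Longrightarrow> xs (j * M + i) = traj F (xs (j * M)) (V j) i"
    using rollout_closed_loop_optimizers[OF TM \<open>M \<le> N\<close> cl feasible] by blast
  define j i where "j = k div M" and "i = k mod M"
  have k: "k = j * M + i" and "i < M"
    using \<open>0 < M\<close> by (simp_all add: j_def i_def)
  then have "traj F (xs (j * M)) (V j) i \<in> X \<and> V j i \<in> U"
    using V(1)[of j] \<open>M \<le> N\<close> by (simp add: ocp_optimal_def ocp_admissible_def)
  then show ?thesis
    using k V(2,3) \<open>i < M\<close> by simp
qed

context
  fixes F :: "'s \<Rightarrow> 'i \<Rightarrow> 's" and X U Xf L Vf N M
  assumes TM: "terminal_cost_decrease F X U Xf L Vf M" and M: "0 < M" "M \<le> N"
    and L_nonneg: "\<forall>x\<in>X. \<forall>u\<in>U. 0 \<le> L x u" and Vf_nonneg: "\<forall>x\<in>Xf. 0 \<le> Vf x"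
begin

lemma rollout_closed_loop_cost_le:
  assumes cl: "rollout_closed_loop F X U Xf L Vf N M xs us"
    and adm: "ocp_admissible F X U Xf N (xs 0) ws"
  shows "(\<Sum>k<n. L (xs k) (us k)) \<le> ocp_cost F L Vf N (xs 0) ws"
proof -
  have feasible: "ocp_feasible F X U Xf N (xs 0)"
    using adm by (auto simp: ocp_feasible_def)
  obtain V where V: "\<And>j. ocp_optimal F X U Xf L Vf N (xs (j * M)) (V j)"
    "\<And>j i. i < M \<Longrightarrow> us (j * M + i) = V j i"
    "\<And>j i. i \<le> M \<Longrightarrow> xs (j * M + i) = traj F (xs (j * M)) (V j) i"
    using rollout_closed_loop_optimizers[OF TM \<open>M \<le> N\<close> cl feasible] by blast
  define cost where "cost j = ocp_cost F L Vf N (xs (j * M)) (V j)" for j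
  have block: "cost (Suc j) + (\<Sum>i<M. L (xs (j * M + i)) (us (j * M + i))) \<le> cost j" for j
  proof -
    obtain ws where "ocp_admissible F X U Xf N (xs (Suc j * M)) ws"
      "ocp_cost F L Vf N (xs (Suc j * M)) ws + (\<Sum>i<M. L (xs (j * M + i)) (us (j * M + i))) \<le> cost j"
      using ocp_admissible_shifted_candidate[OF TM \<open>M \<le> N\<close>, of "xs (j * M)" "V j"] V
      by (auto simp: ocp_optimal_def cost_def add.commute[of M] intro: sum.cong)
    then show ?thesis
      using V(1)[of "Suc j"] by (auto simp: ocp_optimal_def cost_def)
  qed
  have accumulated: "(\<Sum>k<j * M. L (xs k) (us k)) + cost j \<le> cost 0" for j
  proof (induction j)
    case (Suc j)
    then show ?case
      using block[of j] sum_lessThan_add[of "\<lambda>k. L (xs k) (us k)" "j * M" M] by (simp add: add.commute)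
  qed simp
  have "(\<Sum>k<n. L (xs k) (us k)) \<le> (\<Sum>k<n * M. L (xs k) (us k))"
    using rollout_closed_loop_in_constraints[OF TM M cl feasible] L_nonneg \<open>0 < M\<close>
    by (intro sum_mono2) auto
  also have "\<dots> \<le> cost 0"
    using accumulated[of n] ocp_cost_nonneg[OF L_nonneg Vf_nonneg] V(1)[of n]
    by (fastforce simp: cost_def ocp_optimal_def)
  also have "\<dots> \<le> ocp_cost F L Vf N (xs 0) ws"
    using V(1)[of 0] adm by (simp add: cost_def ocp_optimal_def)
  finally show ?thesis .
qed

lemma rollout_closed_loop_stage_cost_le:
  assumes cl: "rollout_closed_loop F X U Xf L Vf N M xs us"
    and adm: "ocp_admissible F X U Xf N (xs 0) ws"
  shows "L (xs k) (us k) \<le> ocp_cost F L Vf N (xs 0) ws"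
proof -
  have "ocp_feasible F X U Xf N (xs 0)"
    using adm by (auto simp: ocp_feasible_def)
  then have "0 \<le> (\<Sum>i<k. L (xs i) (us i))"
    using rollout_closed_loop_in_constraints[OF TM M cl] L_nonneg by (intro sum_nonneg) blast
  then show ?thesis
    using rollout_closed_loop_cost_le[OF cl adm, of "Suc k"] by simp
qed

lemma rollout_closed_loop_detectable:
  fixes d :: "'s \<Rightarrow> real"
  assumes detectable: "\<forall>x\<in>X. \<forall>u\<in>U. \<forall>u'\<in>U.
      F x u \<in> X \<longrightarrow> L x u < \<eta> \<longrightarrow> L (F x u) u' < \<eta> \<longrightarrow> d (F x u) < \<epsilon>"
    and cl: "rollout_closed_loop F X U Xf L Vf N M xs us"
    and feasible: "ocp_feasible F X U Xf N (xs 0)"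
    and "L (xs k) (us k) < \<eta>" "L (xs (Suc k)) (us (Suc k)) < \<eta>"
  shows "d (xs (Suc k)) < \<epsilon>"
  using assms rollout_closed_loop_in_constraints[OF TM M cl feasible]
  by (metis rollout_closed_loop_def)

lemma rollout_stable:
  fixes d :: "'s \<Rightarrow> real"
  assumes TN: "terminal_cost_decrease F X U Xf L Vf N"
    and detectable: "\<And>\<epsilon>. \<epsilon> > 0 \<Longrightarrow> \<exists>\<eta>>0. \<forall>x\<in>X. \<forall>u\<in>U. \<forall>u'\<in>U.
        F x u \<in> X \<longrightarrow> L x u < \<eta> \<longrightarrow> L (F x u) u' < \<eta> \<longrightarrow> d (F x u) < \<epsilon>"
    and Vf_small: "\<And>\<eta>. \<eta> > 0 \<Longrightarrow> \<exists>\<delta>>0. \<forall>x. d x < \<delta> \<longrightarrow> x \<in> Xf \<and> Vf x < \<eta>"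
    and "\<epsilon> > 0"
  obtains \<delta> where "\<delta> > 0" and "\<And>xs us k. rollout_closed_loop F X U Xf L Vf N M xs us \<Longrightarrow>
    ocp_feasible F X U Xf N (xs 0) \<Longrightarrow> d (xs 0) < \<delta> \<Longrightarrow> d (xs k) < \<epsilon>"
proof -
  obtain \<eta> where "\<eta> > 0" and \<eta>: "\<forall>x\<in>X. \<forall>u\<in>U. \<forall>u'\<in>U.
      F x u \<in> X \<longrightarrow> L x u < \<eta> \<longrightarrow> L (F x u) u' < \<eta> \<longrightarrow> d (F x u) < \<epsilon>"
    using detectable[OF \<open>\<epsilon> > 0\<close>] by blast
  obtain \<delta> where "\<delta> > 0" and \<delta>: "\<forall>x. d x < \<delta> \<longrightarrow> x \<in> Xf \<and> Vf x < \<eta>"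
    using Vf_small[OF \<open>\<eta> > 0\<close>] by blast
  have "d (xs k) < \<epsilon>"
    if cl: "rollout_closed_loop F X U Xf L Vf N M xs us"
      and feasible: "ocp_feasible F X U Xf N (xs 0)" and "d (xs 0) < min \<delta> \<epsilon>" for xs us k
  proof -
    have "xs 0 \<in> Xf" and "Vf (xs 0) < \<eta>"
      using \<delta> \<open>d (xs 0) < min \<delta> \<epsilon>\<close> by auto
    then obtain ws where ws: "ocp_admissible F X U Xf N (xs 0) ws"
      "ocp_cost F L Vf N (xs 0) ws \<le> Vf (xs 0)"
      using TN by (auto simp: terminal_cost_decrease_def)
    then have "L (xs i) (us i) < \<eta>" for i
      using rollout_closed_loop_stage_cost_le[OF cl ws(1), of i] \<open>Vf (xs 0) < \<eta>\<close> by linarith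
    then show ?thesis
    proof (cases k)
      case 0
      then show ?thesis using \<open>d (xs 0) < min \<delta> \<epsilon>\<close> by simp
    next
      case (Suc i)
      then show ?thesis
        using rollout_closed_loop_detectable[OF \<eta> cl feasible] \<open>\<And>i. L (xs i) (us i) < \<eta>\<close> by blast
    qed
  qed
  moreover have "min \<delta> \<epsilon> > 0"
    using \<open>\<delta> > 0\<close> \<open>\<epsilon> > 0\<close> by simp
  ultimately show ?thesis
    using that by blast
qed

lemma rollout_attractive:
  fixes d :: "'s \<Rightarrow> real"
  assumes detectable: "\<And>\<epsilon>. \<epsilon> > 0 \<Longrightarrow> \<exists>\<eta>>0. \<forall>x\<in>X. \<forall>u\<in>U. \<forall>u'\<in>U.
        F x u \<in> X \<longrightarrow> L x u < \<eta> \<longrightarrow> L (F x u) u' < \<eta> \<longrightarrow> d (F x u) < \<epsilon>"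
    and d_nonneg: "\<And>x. 0 \<le> d x"
    and cl: "rollout_closed_loop F X U Xf L Vf N M xs us"
    and feasible: "ocp_feasible F X U Xf N (xs 0)"
  shows "(\<lambda>k. d (xs k)) \<longlonglongrightarrow> 0"
proof -
  obtain ws where ws: "ocp_admissible F X U Xf N (xs 0) ws"
    using feasible by (auto simp: ocp_feasible_def)
  have "0 \<le> L (xs k) (us k)" for k
    using rollout_closed_loop_in_constraints[OF TM M cl feasible] L_nonneg by blast
  then have "summable (\<lambda>k. L (xs k) (us k))"
    using rollout_closed_loop_cost_le[OF cl ws] by (rule summableI_nonneg_bounded)
  then have L0: "(\<lambda>k. L (xs k) (us k)) \<longlonglongrightarrow> 0"
    by (rule summable_LIMSEQ_zero)
  have "(\<lambda>k. d (xs (Suc k))) \<longlonglongrightarrow> 0"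
  proof (rule order_tendstoI)
    fix \<epsilon> :: real assume "0 < \<epsilon>"
    then obtain \<eta> where "\<eta> > 0" and \<eta>: "\<forall>x\<in>X. \<forall>u\<in>U. \<forall>u'\<in>U.
        F x u \<in> X \<longrightarrow> L x u < \<eta> \<longrightarrow> L (F x u) u' < \<eta> \<longrightarrow> d (F x u) < \<epsilon>"
      using detectable by blast
    have "eventually (\<lambda>k. L (xs k) (us k) < \<eta> \<and> L (xs (Suc k)) (us (Suc k)) < \<eta>) sequentially"
      using order_tendstoD(2)[OF L0 \<open>\<eta> > 0\<close>] order_tendstoD(2)[OF LIMSEQ_Suc[OF L0] \<open>\<eta> > 0\<close>]
      by (rule eventually_conj)
    then show "eventually (\<lambda>k. d (xs (Suc k)) < \<epsilon>) sequentially"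
      by (rule eventually_mono) (elim conjE, rule rollout_closed_loop_detectable[OF \<eta> cl feasible])
  qed (use d_nonneg in \<open>auto intro: always_eventually less_le_trans\<close>)
  then show ?thesis
    by (rule LIMSEQ_imp_Suc)
qed

lemma rollout_asympt_stable:
  fixes d :: "'s \<Rightarrow> real"
  assumes "terminal_cost_decrease F X U Xf L Vf N"
    and "\<And>\<epsilon>. \<epsilon> > 0 \<Longrightarrow> \<exists>\<eta>>0. \<forall>x\<in>X. \<forall>u\<in>U. \<forall>u'\<in>U.
        F x u \<in> X \<longrightarrow> L x u < \<eta> \<longrightarrow> L (F x u) u' < \<eta> \<longrightarrow> d (F x u) < \<epsilon>"
    and "\<And>\<eta>. \<eta> > 0 \<Longrightarrow> \<exists>\<delta>>0. \<forall>x. d x < \<delta> \<longrightarrow> x \<in> Xf \<and> Vf x < \<eta>"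
    and "\<And>x. 0 \<le> d x"
  shows "asympt_stable_cl (rollout_closed_loop F X U Xf L Vf N M) {x. ocp_feasible F X U Xf N x} d"
  unfolding asympt_stable_cl_def
  using rollout_stable[OF assms(1-3)] rollout_attractive[OF assms(2,4)] by (metis mem_Collect_eq)

end

section \<open>Positive definite quadratic forms\<close>

lemma qf_scaleR: "qf A (c *\<^sub>R v) = c\<^sup>2 * qf A v"
  by (simp add: qf_def matrix_vector_mult_scaleR power2_eq_square)

lemma pos_def_mat_qf_lower_bound:
  fixes A :: "real^'k^'k"
  assumes "pos_def_mat A"
  obtains l where "l > 0" and "\<And>v. l * (norm v)\<^sup>2 \<le> qf A v"
proof -
  have "continuous_on (sphere 0 1) (qf A)"
    unfolding qf_def by (intro continuous_intros linear_continuous_on matrix_vector_mul_bounded_linear)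
  moreover have "sphere (0::real^'k) 1 \<noteq> {}"
    using vector_choose_size[of 1] by auto
  ultimately obtain v0 where v0: "v0 \<in> sphere 0 1" "\<And>v. v \<in> sphere 0 1 \<Longrightarrow> qf A v0 \<le> qf A v"
    using continuous_attains_inf[OF compact_sphere] by blast
  have "qf A v0 > 0"
    using assms v0(1) by (auto simp: pos_def_mat_def dest: spec[of _ v0])
  moreover have "qf A v0 * (norm v)\<^sup>2 \<le> qf A v" for v
  proof (cases "v = 0")
    case False
    then have "qf A v = (norm v)\<^sup>2 * qf A (v /\<^sub>R norm v)"
      by (simp add: qf_scaleR field_simps power2_eq_square)
    then show ?thesis
      using v0(2)[of "v /\<^sub>R norm v"] False by (simp add: mult.commute mult_left_mono)
  qed (simp add: qf_def)
  ultimately show ?thesis using that by blast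
qed

lemma pos_def_mat_qf_nonneg:
  assumes "pos_def_mat A"
  shows "0 \<le> qf A v"
proof -
  obtain l where "l > 0" and "l * (norm v)\<^sup>2 \<le> qf A v"
    using pos_def_mat_qf_lower_bound[OF assms] by blast
  then show ?thesis
    by (smt (verit) zero_le_power2 mult_nonneg_nonneg)
qed

lemma pos_def_mat_qf_small:
  assumes "pos_def_mat A" and "\<epsilon> > 0"
  obtains \<eta> where "\<eta> > 0" and "\<And>v. qf A v < \<eta> \<Longrightarrow> norm v < \<epsilon>"
proof -
  obtain l where "l > 0" and l: "\<And>v. l * (norm v)\<^sup>2 \<le> qf A v"
    using pos_def_mat_qf_lower_bound[OF assms(1)] by blast
  have "norm v < \<epsilon>" if "qf A v < l * \<epsilon>\<^sup>2" for v
  proof -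
    have "(norm v)\<^sup>2 < \<epsilon>\<^sup>2"
      using l[of v] that \<open>l > 0\<close> by (smt (verit) mult_le_cancel_left)
    then show ?thesis
      using \<open>\<epsilon> > 0\<close> by (simp add: power_less_imp_less_base)
  qed
  then show ?thesis
    using that[of "l * \<epsilon>\<^sup>2"] \<open>l > 0\<close> \<open>\<epsilon> > 0\<close> by simp
qed

section \<open>The token bucket\<close>

lemma one_le_power2_diff:
  fixes \<beta> b :: int
  assumes "0 \<le> \<beta>" and "\<beta> < b"
  shows "1 \<le> (of_int b)\<^sup>2 - (of_int \<beta> :: real)\<^sup>2"
proof -
  have "(of_int \<beta> + 1 :: real)\<^sup>2 \<le> (of_int b)\<^sup>2"
    using assms by (intro power_mono) (simp_all add: of_int_add[symmetric] del: of_int_add)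
  then show ?thesis
    using assms(1) by (simp add: power2_eq_square algebra_simps)
qed

lemma sum_power2_pred:
  "(\<Sum>i<Suc n. (real (i - 1))\<^sup>2) = real n * (real n - 1) * (2 * real n - 1) / 6"
  by (induction n) (auto simp: field_simps power2_eq_square)

lemma ceiling_divide_pred_mult_le:
  fixes c g :: int
  assumes "0 < g" and "0 \<le> c"
  shows "int (nat \<lceil>real_of_int c / real_of_int g\<rceil> - 1) * g \<le> c"
proof -
  define q where "q = \<lceil>real_of_int c / real_of_int g\<rceil>"
  have "0 \<le> real_of_int c / real_of_int g"
    using assms by simp
  then have "q \<ge> 0"
    unfolding q_def by linarith
  have "real_of_int q - 1 < real_of_int c / real_of_int g"
    unfolding q_def by linarith
  then have "(q - 1) * g < c"
    using assms(1) by (simp add: field_simps flip: of_int_mult of_int_diff)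
  then show ?thesis
    using \<open>q \<ge> 0\<close> assms by (cases "q = 0") (simp_all add: q_def[symmetric] of_nat_diff)
qed

text \<open>Along the terminal block the token level is \<open>min (\<beta> + (i - 1) g) b\<close> at step \<open>i\<close>: the first
  transmission uses the direct link, which adds no tokens, and the truncated subtraction
  \<open>i - 1\<close> makes the formula correct at \<open>i = 0\<close> as well.  The level is at least \<open>(i - 1) g\<close>, which is
  where the sum of squares in (A4) comes from, and it gains at least one token unless full.\<close>

lemma token_cost_le_terminal_decrease:
  fixes \<beta> b g :: int and q :: nat and \<psi> \<sigma> :: real
  assumes "0 \<le> \<beta>" "\<beta> \<le> b" "1 \<le> g" "2 \<le> q" "int (q - 1) * g \<le> b" "0 < \<psi>" "0 \<le> \<sigma>"
    and \<sigma>: "\<psi> * (real q * (of_int b)\<^sup>2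
              - (of_int g)\<^sup>2 * (real q - 1) * (real q - 2) * (2 * real q - 3) / 6) \<le> \<sigma>"
  shows "\<psi> * (\<Sum>i<q. (of_int b)\<^sup>2 - (of_int (min (\<beta> + int (i - 1) * g) b))\<^sup>2)
      \<le> \<sigma> * ((of_int (min (\<beta> + int (q - 1) * g) b))\<^sup>2 - (of_int \<beta>)\<^sup>2)"
proof (cases "\<beta> = b")
  case True
  have "min (b + int i * g) b = b" for i
    using \<open>1 \<le> g\<close> by simp
  then show ?thesis
    using True by simp
next
  case False
  have level: "(real (i - 1) * of_int g)\<^sup>2 \<le> (of_int (min (\<beta> + int (i - 1) * g) b))\<^sup>2"
    if "i < q" for i
  proof -
    have "int (i - 1) * g \<le> int (q - 1) * g"
      using that \<open>1 \<le> g\<close> by (intro mult_right_mono) auto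
    then have "int (i - 1) * g \<le> min (\<beta> + int (i - 1) * g) b"
      using assms(1,5) by simp
    then have "(of_int (int (i - 1) * g) :: real)\<^sup>2 \<le> (of_int (min (\<beta> + int (i - 1) * g) b))\<^sup>2"
      using \<open>1 \<le> g\<close> by (intro power_mono) (simp_all only: of_int_le_iff, simp)
    then show ?thesis
      by simp
  qed
  have "(\<Sum>i<q. (of_int b)\<^sup>2 - (of_int (min (\<beta> + int (i - 1) * g) b))\<^sup>2)
      \<le> (\<Sum>i<q. (of_int b)\<^sup>2 - (real (i - 1) * of_int g)\<^sup>2)"
    using level by (intro sum_mono) simp
  also have "\<dots> = real q * (of_int b)\<^sup>2 - (of_int g)\<^sup>2 * (\<Sum>i<q. (real (i - 1))\<^sup>2)"
    by (simp add: sum_subtractf sum_distrib_left power_mult_distrib mult.commute)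
  also have "(\<Sum>i<q. (real (i - 1))\<^sup>2) = (real q - 1) * (real q - 2) * (2 * real q - 3) / 6"
    using sum_power2_pred[of "q - 1"] \<open>2 \<le> q\<close> by (simp add: of_nat_diff algebra_simps)
  finally have token_sum: "(\<Sum>i<q. (of_int b)\<^sup>2 - (of_int (min (\<beta> + int (i - 1) * g) b))\<^sup>2)
      \<le> real q * (of_int b)\<^sup>2 - (of_int g)\<^sup>2 * (real q - 1) * (real q - 2) * (2 * real q - 3) / 6"
    by (simp add: algebra_simps)
  have "\<psi> * (\<Sum>i<q. (of_int b)\<^sup>2 - (of_int (min (\<beta> + int (i - 1) * g) b))\<^sup>2) \<le> \<sigma> * 1"
    using order.trans[OF mult_left_mono[OF token_sum less_imp_le[OF \<open>0 < \<psi>\<close>]] \<sigma>] by simp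
  also have "\<dots> \<le> \<sigma> * ((of_int (min (\<beta> + int (q - 1) * g) b))\<^sup>2 - (of_int \<beta>)\<^sup>2)"
  proof (intro mult_left_mono one_le_power2_diff \<open>0 \<le> \<sigma>\<close> \<open>0 \<le> \<beta>\<close>)
    have "1 * 1 \<le> int (q - 1) * g"
      using \<open>2 \<le> q\<close> \<open>1 \<le> g\<close> by (intro mult_mono) auto
    then show "\<beta> < min (\<beta> + int (q - 1) * g) b"
      using False \<open>\<beta> \<le> b\<close> by linarith
  qed
  finally show ?thesis .
qed

section \<open>The networked control system\<close>

definition direct_then_hold :: "real^'m \<Rightarrow> nat \<Rightarrow> 'm ninput" where
  "direct_then_hold u i = (if i = 0 then (u, 0, 1) else (u, 0, 0))"

lemma traj_direct_then_hold:
  assumes "\<beta> \<le> b" and "0 \<le> g"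
  shows "traj (sys_f fp g c b) (xp, us, \<beta>) (direct_then_hold u) i
    = (fpi fp i xp u, if i = 0 then us else u, min (\<beta> + int (i - 1) * g) b)"
proof (induction i)
  case 0
  show ?case using assms by (simp add: fpi_def)
next
  case (Suc i)
  then show ?case
    using assms by (cases i) (auto simp: sys_f_def applied_input_def direct_then_hold_def fpi_def
        min_def algebra_simps)
qed

lemma ocp_admissible_direct_then_hold:
  fixes fp :: "real^'n \<Rightarrow> real^'m \<Rightarrow> real^'n"
  assumes "Xfp \<subseteq> Xp" "xp \<in> Xfp" "us \<in> Up" "u \<in> Up" "0 \<le> \<beta>" "\<beta> \<le> b" "0 \<le> g"
    and "\<forall>i\<in>{1..q-1}. fpi fp i xp u \<in> Xp" "fpi fp q xp u \<in> Xfp"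
  shows "ocp_admissible (sys_f fp g c b) (state_set Xp Up b) (input_set Up) (state_set Xfp Up b) q
    (xp, us, \<beta>) (direct_then_hold u)"
  unfolding ocp_admissible_def traj_direct_then_hold[OF assms(6,7)]
proof (intro conjI allI impI)
  fix i assume "i < q"
  then have "fpi fp i xp u \<in> Xp"
    using assms(1,2,8) by (cases "i = 0") (auto simp: fpi_def)
  then show "(fpi fp i xp u, if i = 0 then us else u, min (\<beta> + int (i - 1) * g) b) \<in> state_set Xp Up b"
    using assms(3-7) by (simp add: state_set_def)
  show "direct_then_hold u i \<in> input_set Up"
    using \<open>u \<in> Up\<close> by (simp add: direct_then_hold_def input_set_def)
next
  show "(fpi fp q xp u, if q = 0 then us else u, min (\<beta> + int (q - 1) * g) b) \<in> state_set Xfp Up b"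
    using assms(3-7,9) by (simp add: state_set_def)
qed

lemma ocp_cost_direct_then_hold:
  fixes fp :: "real^'n \<Rightarrow> real^'m \<Rightarrow> real^'n"
  assumes "\<beta> \<le> b" "0 \<le> g"
  shows "ocp_cost (sys_f fp g c b) (stage_cost Q R \<psi> b) (term_cost Vfp \<sigma> b) q
      (xp, us, \<beta>) (direct_then_hold u)
    = (\<Sum>i<q. qf Q (fpi fp i xp u)) + real q * qf R u
      + \<psi> * (\<Sum>i<q. (of_int b)\<^sup>2 - (of_int (min (\<beta> + int (i - 1) * g) b))\<^sup>2)
      + (Vfp (fpi fp q xp u) + \<sigma> * ((of_int b)\<^sup>2 - (of_int (min (\<beta> + int (q - 1) * g) b))\<^sup>2))"
proof -
  have "stage_cost Q R \<psi> b (traj (sys_f fp g c b) (xp, us, \<beta>) (direct_then_hold u) i)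
      (direct_then_hold u i)
    = qf Q (fpi fp i xp u) + qf R u + \<psi> * ((of_int b)\<^sup>2 - (of_int (min (\<beta> + int (i - 1) * g) b))\<^sup>2)"
    for i
    by (simp add: traj_direct_then_hold[OF assms] stage_cost_def direct_then_hold_def)
  then show ?thesis
    by (simp add: ocp_cost_def sum.distrib sum_distrib_left traj_direct_then_hold[OF assms] term_cost_def)
qed

lemma sys_f_terminal_cost_decrease:
  fixes fp :: "real^'n \<Rightarrow> real^'m \<Rightarrow> real^'n"
  assumes "Xfp \<subseteq> Xp" and kp: "kp \<in> Xfp \<rightarrow> Up"
    and invariant: "\<forall>xp\<in>Xfp. (\<forall>i\<in>{1..q-1}. fpi fp i xp (kp xp) \<in> Xp) \<and> fpi fp q xp (kp xp) \<in> Xfp"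
    and decrease: "\<forall>xp\<in>Xfp. Vfp (fpi fp q xp (kp xp)) - Vfp xp
          \<le> - real q * qf R (kp xp) - (\<Sum>i<q. qf Q (fpi fp i xp (kp xp)))"
    and "1 \<le> g" "2 \<le> q" "int (q - 1) * g \<le> b" "0 < \<psi>" "0 \<le> \<sigma>"
    and \<sigma>: "\<psi> * (real q * (of_int b)\<^sup>2
              - (of_int g)\<^sup>2 * (real q - 1) * (real q - 2) * (2 * real q - 3) / 6) \<le> \<sigma>"
  shows "terminal_cost_decrease (sys_f fp g c b) (state_set Xp Up b) (input_set Up)
    (state_set Xfp Up b) (stage_cost Q R \<psi> b) (term_cost Vfp \<sigma> b) q"
  unfolding terminal_cost_decrease_def
proof
  fix x assume "x \<in> state_set Xfp Up b"
  then obtain xp us \<beta> where x: "x = (xp, us, \<beta>)" and "xp \<in> Xfp" "us \<in> Up" "0 \<le> \<beta>" "\<beta> \<le> b"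
    by (auto simp: state_set_def)
  have "0 \<le> g"
    using \<open>1 \<le> g\<close> by simp
  have "ocp_admissible (sys_f fp g c b) (state_set Xp Up b) (input_set Up) (state_set Xfp Up b) q
      x (direct_then_hold (kp xp))"
    unfolding x using \<open>Xfp \<subseteq> Xp\<close> \<open>xp \<in> Xfp\<close> \<open>us \<in> Up\<close> kp \<open>0 \<le> \<beta>\<close> \<open>\<beta> \<le> b\<close> \<open>0 \<le> g\<close> invariant
    by (intro ocp_admissible_direct_then_hold) auto
  moreover have "ocp_cost (sys_f fp g c b) (stage_cost Q R \<psi> b) (term_cost Vfp \<sigma> b) q
      x (direct_then_hold (kp xp)) \<le> term_cost Vfp \<sigma> b x"
  proof -
    have "Vfp (fpi fp q xp (kp xp)) + (\<Sum>i<q. qf Q (fpi fp i xp (kp xp))) + real q * qf R (kp xp)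
        \<le> Vfp xp"
      using decrease \<open>xp \<in> Xfp\<close> by force
    then show ?thesis
      using token_cost_le_terminal_decrease[OF \<open>0 \<le> \<beta>\<close> \<open>\<beta> \<le> b\<close> assms(5-10)]
      by (simp add: x ocp_cost_direct_then_hold[OF \<open>\<beta> \<le> b\<close> \<open>0 \<le> g\<close>] term_cost_def
          right_diff_distrib)
  qed
  ultimately show "\<exists>ws. ocp_admissible (sys_f fp g c b) (state_set Xp Up b) (input_set Up)
      (state_set Xfp Up b) q x ws \<and>
      ocp_cost (sys_f fp g c b) (stage_cost Q R \<psi> b) (term_cost Vfp \<sigma> b) q x ws \<le> term_cost Vfp \<sigma> b x"
    by blast
qed

lemma stage_cost_input_set:
  assumes "u \<in> input_set Up"
  shows "stage_cost Q R \<psi> b (xp, us, \<beta>) u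
    = qf Q xp + qf R (applied_input (xp, us, \<beta>) u) + \<psi> * ((of_int b)\<^sup>2 - (of_int \<beta>)\<^sup>2)"
proof -
  obtain uc \<gamma> \<delta> where u: "u = (uc, \<gamma>, \<delta>)" and "(\<gamma>, \<delta>) \<in> {(0, 0), (1, 0), (0, 1)}"
    using assms by (cases u) (auto simp: input_set_def)
  then show ?thesis
    by (auto simp: stage_cost_def applied_input_def)
qed

lemma token_cost_nonneg:
  fixes \<beta> b :: int and \<psi> :: real
  assumes "0 \<le> \<psi>" "0 \<le> \<beta>" "\<beta> \<le> b"
  shows "0 \<le> \<psi> * ((of_int b)\<^sup>2 - (of_int \<beta>)\<^sup>2)"
  using assms by (simp add: power_mono)

lemma stage_cost_nonneg:
  assumes "pos_def_mat Q" "pos_def_mat R" "0 \<le> \<psi>"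
  shows "\<forall>x\<in>state_set Xp Up b. \<forall>u\<in>input_set Up. 0 \<le> stage_cost Q R \<psi> b x u"
proof (intro ballI)
  fix x u assume "x \<in> state_set Xp Up b" "u \<in> input_set Up"
  then obtain xp us \<beta> where x: "x = (xp, us, \<beta>)" and \<beta>: "0 \<le> \<beta>" "\<beta> \<le> b"
    by (auto simp: state_set_def)
  then show "0 \<le> stage_cost Q R \<psi> b x u"
    using token_cost_nonneg[OF assms(3) \<beta>] pos_def_mat_qf_nonneg[OF assms(1), of xp]
      pos_def_mat_qf_nonneg[OF assms(2), of "applied_input x u"]
    by (simp add: x stage_cost_input_set[OF \<open>u \<in> input_set Up\<close>])
qed

lemma term_cost_nonneg:
  assumes "\<forall>xp\<in>Xfp. 0 \<le> Vfp xp" "0 \<le> \<sigma>"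
  shows "\<forall>x\<in>state_set Xfp Up b. 0 \<le> term_cost Vfp \<sigma> b x"
  using assms token_cost_nonneg[OF assms(2)] by (auto simp: state_set_def term_cost_def)

lemma stage_cost_small:
  assumes "pos_def_mat Q" "pos_def_mat R" "0 < \<psi>" "0 < \<epsilon>"
  obtains \<eta> where "\<eta> > 0" and "\<And>x u. x \<in> state_set Xp Up b \<Longrightarrow> u \<in> input_set Up \<Longrightarrow>
    stage_cost Q R \<psi> b x u < \<eta> \<Longrightarrow>
    norm (fst x) < \<epsilon> \<and> norm (applied_input x u) < \<epsilon> \<and> snd (snd x) = b"
proof -
  obtain \<eta>Q where "\<eta>Q > 0" and \<eta>Q: "\<And>v. qf Q v < \<eta>Q \<Longrightarrow> norm v < \<epsilon>"
    using pos_def_mat_qf_small[OF assms(1,4)] by blast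
  obtain \<eta>R where "\<eta>R > 0" and \<eta>R: "\<And>v. qf R v < \<eta>R \<Longrightarrow> norm v < \<epsilon>"
    using pos_def_mat_qf_small[OF assms(2,4)] by blast
  have "norm xp < \<epsilon> \<and> norm (applied_input (xp, us, \<beta>) u) < \<epsilon> \<and> \<beta> = b"
    if "(xp, us, \<beta>) \<in> state_set Xp Up b" "u \<in> input_set Up"
      and small: "stage_cost Q R \<psi> b (xp, us, \<beta>) u < min \<eta>Q (min \<eta>R \<psi>)" for xp us \<beta> u
  proof -
    have \<beta>: "0 \<le> \<beta>" "\<beta> \<le> b"
      using that(1) by (auto simp: state_set_def)
    note parts = pos_def_mat_qf_nonneg[OF assms(1), of xp]
      pos_def_mat_qf_nonneg[OF assms(2), of "applied_input (xp, us, \<beta>) u"]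
      token_cost_nonneg[OF less_imp_le[OF \<open>0 < \<psi>\<close>] \<beta>]
    have "qf Q xp < \<eta>Q" "qf R (applied_input (xp, us, \<beta>) u) < \<eta>R"
      and token: "\<psi> * ((of_int b)\<^sup>2 - (of_int \<beta>)\<^sup>2) < \<psi>"
      using small[unfolded min_less_iff_conj] parts stage_cost_input_set[OF that(2), of Q R \<psi> b xp us \<beta>]
      by linarith+
    moreover have "\<beta> = b"
    proof (rule ccontr)
      assume "\<beta> \<noteq> b"
      then have "\<psi> * 1 \<le> \<psi> * ((of_int b)\<^sup>2 - (of_int \<beta>)\<^sup>2)"
        using one_le_power2_diff[OF \<beta>(1)] \<beta>(2) \<open>0 < \<psi>\<close> by (intro mult_left_mono) auto
      then show False
        using token by simp
    qed
    ultimately show ?thesis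
      using \<eta>Q \<eta>R by blast
  qed
  then show ?thesis
    using that[of "min \<eta>Q (min \<eta>R \<psi>)"] \<open>\<eta>Q > 0\<close> \<open>\<eta>R > 0\<close> \<open>0 < \<psi>\<close> by force
qed

lemma sys_f_detectable:
  assumes "pos_def_mat Q" "pos_def_mat R" "0 < \<psi>" "0 < \<epsilon>"
  shows "\<exists>\<eta>>0. \<forall>x\<in>state_set Xp Up b. \<forall>u\<in>input_set Up. \<forall>u'\<in>input_set Up.
    sys_f fp g c b x u \<in> state_set Xp Up b \<longrightarrow> stage_cost Q R \<psi> b x u < \<eta> \<longrightarrow>
    stage_cost Q R \<psi> b (sys_f fp g c b x u) u' < \<eta> \<longrightarrow> dist_eq b (sys_f fp g c b x u) < \<epsilon>"
proof -
  obtain \<eta> where "\<eta> > 0" and \<eta>: "\<And>x u. x \<in> state_set Xp Up b \<Longrightarrow> u \<in> input_set Up \<Longrightarrow>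
      stage_cost Q R \<psi> b x u < \<eta> \<Longrightarrow>
      norm (fst x) < \<epsilon> / 2 \<and> norm (applied_input x u) < \<epsilon> / 2 \<and> snd (snd x) = b"
    using half_gt_zero[OF assms(4)] by (rule stage_cost_small[OF assms(1-3), where Xp=Xp and Up=Up and b=b]) blast
  have "dist_eq b (sys_f fp g c b x u) < \<epsilon>"
    if "x \<in> state_set Xp Up b" "u \<in> input_set Up" "u' \<in> input_set Up"
      "sys_f fp g c b x u \<in> state_set Xp Up b" "stage_cost Q R \<psi> b x u < \<eta>"
      "stage_cost Q R \<psi> b (sys_f fp g c b x u) u' < \<eta>" for x u u'
  proof -
    obtain xp' us' \<beta>' where x': "sys_f fp g c b x u = (xp', us', \<beta>')"
      by (cases "sys_f fp g c b x u")
    have "us' = applied_input x u"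
      using x' by (cases x; cases u) (simp add: sys_f_def)
    then show ?thesis
      using \<eta>[OF that(1,2,5)] \<eta>[OF that(4,3,6)] by (simp add: x' dist_eq_def)
  qed
  then show ?thesis
    using \<open>\<eta> > 0\<close> by blast
qed

lemma term_cost_small_near_equilibrium:
  assumes "continuous_on Xfp Vfp" "Vfp 0 = 0" "(0, 0) \<in> interior (Xfp \<times> Up)" "0 \<le> b" "0 < \<eta>"
  shows "\<exists>\<delta>>0. \<forall>x. dist_eq b x < \<delta> \<longrightarrow> x \<in> state_set Xfp Up b \<and> term_cost Vfp \<sigma> b x < \<eta>"
proof -
  have "0 \<in> Xfp"
    using interior_subset assms(3) by fastforce
  then obtain d1 where "d1 > 0" and d1: "\<forall>xp\<in>Xfp. dist xp 0 < d1 \<longrightarrow> dist (Vfp xp) (Vfp 0) < \<eta>"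
    using assms(1,5) unfolding continuous_on_iff by blast
  obtain d2 where "d2 > 0" and d2: "ball 0 d2 \<subseteq> Xfp \<times> Up"
    using assms(3) unfolding mem_interior zero_prod_def by blast
  have "x \<in> state_set Xfp Up b \<and> term_cost Vfp \<sigma> b x < \<eta>" if "dist_eq b x < min 1 (min d1 d2)" for x
  proof -
    obtain xp us \<beta> where x: "x = (xp, us, \<beta>)"
      by (cases x)
    have near: "norm xp + norm us + \<bar>of_int (\<beta> - b)\<bar> < min 1 (min d1 d2)"
      using that by (simp add: x dist_eq_def)
    then have "\<bar>real_of_int (\<beta> - b)\<bar> < 1"
      using norm_ge_zero[of xp] norm_ge_zero[of us] by linarith
    then have "\<beta> = b"
      by (metis of_int_abs of_int_less_1_iff zabs_less_one_iff eq_iff_diff_eq_0)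
    have "norm (xp, us) < d2"
      using near norm_Pair_le[of xp us] norm_ge_zero[of xp] norm_ge_zero[of us] by linarith
    then have "(xp, us) \<in> Xfp \<times> Up"
      using d2 mem_ball_0 by blast
    moreover have "norm xp < d1"
      using near norm_ge_zero[of us] by linarith
    then have "\<bar>Vfp xp\<bar> < \<eta>"
      using d1 \<open>(xp, us) \<in> Xfp \<times> Up\<close> assms(2) by (simp add: dist_norm)
    ultimately show ?thesis
      using \<open>\<beta> = b\<close> \<open>0 \<le> b\<close> by (simp add: x state_set_def term_cost_def)
  qed
  then show ?thesis
    using \<open>d1 > 0\<close> \<open>d2 > 0\<close> by (intro exI[of _ "min 1 (min d1 d2)"]) auto
qed

theorem theorem3:
  fixes fp :: "real^'n \<Rightarrow> real^'m \<Rightarrow> real^'n"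
    and Xp :: "(real^'n) set" and Up :: "(real^'m) set"
    and Q :: "real^'n^'n" and R :: "real^'m^'m"
    and g c b :: int and \<psi> \<sigma> :: real
    and Xfp :: "(real^'n) set" and kp :: "real^'n \<Rightarrow> real^'m" and Vfp :: "real^'n \<Rightarrow> real"
    and r J :: nat
  defines "q \<equiv> nat \<lceil>real_of_int c / real_of_int g\<rceil>"
  defines "M \<equiv> r * q"
  defines "N \<equiv> J * M"
  defines "F \<equiv> sys_f fp g c b"
  defines "X \<equiv> state_set Xp Up b"
  defines "U \<equiv> input_set Up"
  defines "Xf \<equiv> state_set Xfp Up b"
  defines "L \<equiv> stage_cost Q R \<psi> b"
  defines "Vf \<equiv> term_cost Vfp \<sigma> b"
  assumes fp0: "fp 0 0 = 0"
    and Xp: "closed Xp" "0 \<in> Xp"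
    and Up: "compact Up" "0 \<in> Up"
    and QR: "pos_def_mat Q" "pos_def_mat R"
    and gcb: "g \<ge> 1" "c \<ge> g" "b \<ge> c"
    and q2: "q \<ge> 2"
    and psi: "\<psi> > 0"
    and A1: "closed Xfp" "Xfp \<subseteq> Xp" "0 \<in> Xfp" "kp \<in> Xfp \<rightarrow> Up"
      "\<forall>xp\<in>Xfp. (\<forall>i\<in>{1..q-1}. fpi fp i xp (kp xp) \<in> Xp) \<and> fpi fp q xp (kp xp) \<in> Xfp"
      "(0, 0) \<in> interior (Xfp \<times> Up)"
    and A2: "continuous_on Xfp Vfp" "Vfp 0 = 0" "\<forall>xp\<in>Xfp. xp \<noteq> 0 \<longrightarrow> Vfp xp > 0"
      "\<forall>xp\<in>Xfp. Vfp (fpi fp q xp (kp xp)) - Vfp xp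
          \<le> - real q * qf R (kp xp) - (\<Sum>i<q. qf Q (fpi fp i xp (kp xp)))"
    and A4: "\<sigma> > 0"
      "\<sigma> \<ge> \<psi> * (real q * of_int b ^ 2
              - of_int g ^ 2 * (real q - 1) * (real q - 2) * (2 * real q - 3) / 6)"
    and r: "r \<ge> 1" and J: "J \<ge> 1"
    and opt_exists: "\<forall>x0. ocp_feasible F X U Xf N x0 \<longrightarrow> (\<exists>us. ocp_optimal F X U Xf L Vf N x0 us)"
  shows "(\<forall>xs us. rollout_closed_loop F X U Xf L Vf N M xs us \<and> ocp_feasible F X U Xf N (xs 0)
            \<longrightarrow> (\<forall>j. ocp_feasible F X U Xf N (xs (j * M))))
       \<and> asympt_stable_cl (rollout_closed_loop F X U Xf L Vf N M)
            {x. ocp_feasible F X U Xf N x} (dist_eq b)"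
proof -
  have "int (q - 1) * g \<le> c"
    unfolding q_def using gcb by (intro ceiling_divide_pred_mult_le) auto
  then have "int (q - 1) * g \<le> b"
    using gcb by linarith
  then have TB: "terminal_cost_decrease F X U Xf L Vf q"
    unfolding F_def X_def U_def Xf_def L_def Vf_def
    using A1(2,4,5) A2(4) gcb q2 psi A4 by (intro sys_f_terminal_cost_decrease) auto
  have TM: "terminal_cost_decrease F X U Xf L Vf M" and TN: "terminal_cost_decrease F X U Xf L Vf N"
    using terminal_cost_decrease_mult[OF TB, of r] terminal_cost_decrease_mult[OF TB, of "J * r"]
    by (simp_all add: M_def N_def mult.commute mult.left_commute)
  have M: "0 < M" "M \<le> N"
    using r q2 J by (simp_all add: M_def N_def)
  have L_nonneg: "\<forall>x\<in>X. \<forall>u\<in>U. 0 \<le> L x u"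
    unfolding X_def U_def L_def using stage_cost_nonneg[OF QR less_imp_le[OF psi]] .
  have Vf_nonneg: "\<forall>x\<in>Xf. 0 \<le> Vf x"
    unfolding Xf_def Vf_def using A2(2,3) A4(1) by (intro term_cost_nonneg) (auto intro: less_imp_le)
  show ?thesis
  proof (intro conjI allI impI)
    show "ocp_feasible F X U Xf N (xs (j * M))"
      if "rollout_closed_loop F X U Xf L Vf N M xs us \<and> ocp_feasible F X U Xf N (xs 0)" for xs us j
      using rollout_recursively_feasible[OF TM \<open>M \<le> N\<close>] that by blast
    show "asympt_stable_cl (rollout_closed_loop F X U Xf L Vf N M) {x. ocp_feasible F X U Xf N x}
        (dist_eq b)"
    proof (rule rollout_asympt_stable[OF TM M L_nonneg Vf_nonneg TN])
      show "\<exists>\<eta>>0. \<forall>x\<in>X. \<forall>u\<in>U. \<forall>u'\<in>U. F x u \<in> X \<longrightarrow> L x u < \<eta> \<longrightarrow> L (F x u) u' < \<eta>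
          \<longrightarrow> dist_eq b (F x u) < \<epsilon>" if "\<epsilon> > 0" for \<epsilon>
        unfolding F_def X_def U_def L_def by (rule sys_f_detectable[OF QR psi that])
      show "\<exists>\<delta>>0. \<forall>x. dist_eq b x < \<delta> \<longrightarrow> x \<in> Xf \<and> Vf x < \<eta>" if "\<eta> > 0" for \<eta>
        unfolding Xf_def Vf_def using A2(1,2) A1(6) gcb that by (intro term_cost_small_near_equilibrium) auto
    qed (auto simp: dist_eq_def split: prod.split)
  qed
qed

end
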